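(* For each $\lambda\in\mathbb C$ there exists a unique solution $w_\lambda$ of the boundary value problem $\ell(w)=\lambda w$ on $(a,b)$, $\lim_{x\downarrow a}w(x)=1$, $\lim_{x\downarrow a}w^{[1]}(x)=0$. Moreover, for each fixed $x\in(a,b)$, the map $\lambda\mapsto w_\lambda(x)$ is an entire function of exponential type.
   Context: Let $-\infty\le a<b\le\infty$ and let $p,r:(a,b)\to(0,\infty)$ be functions such that $p,p',r,r'$ are locally absolutely continuous on $(a,b)$. Write $\ell u=-\frac{1}{r}(p u')'$ and $u^{[1]}=p u'$. It is assumed that $\int_a^c\int_y^c \frac{dx}{p(x)}\,r(y)\,dy<\infty$ for some $c\in(a,b)$. *)

theory Defs
  imports "HOL-Analysis.Analysis"
begin

definition abs_cont_on :: "real \<Rightarrow> real \<Rightarrow> (real \<Rightarrow> real) \<Rightarrow> bool" where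
  "abs_cont_on s t f \<longleftrightarrow>
     (\<forall>\<epsilon>>0. \<exists>\<delta>>0. \<forall>(n::nat) (u::nat \<Rightarrow> real) (v::nat \<Rightarrow> real).
        (\<forall>i<n. s \<le> u i \<and> u i \<le> v i \<and> v i \<le> t) \<and>
        (\<forall>i<n. \<forall>j<n. i \<noteq> j \<longrightarrow> v i \<le> u j \<or> v j \<le> u i) \<and>
        (\<Sum>i<n. v i - u i) < \<delta>
        \<longrightarrow> (\<Sum>i<n. \<bar>f (v i) - f (u i)\<bar>) < \<epsilon>)"

definition ivl :: "ereal \<Rightarrow> ereal \<Rightarrow> real set" where
  "ivl a b = {x. a < ereal x \<and> ereal x < b}"

definition loc_abs_cont :: "ereal \<Rightarrow> ereal \<Rightarrow> (real \<Rightarrow> real) \<Rightarrow> bool" where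
  "loc_abs_cont a b f \<longleftrightarrow> (\<forall>s t. s \<in> ivl a b \<and> t \<in> ivl a b \<and> s \<le> t \<longrightarrow> abs_cont_on s t f)"

definition at_left_end :: "ereal \<Rightarrow> real filter" where
  "at_left_end a = (if a = -\<infinity> then at_bot else at_right (real_of_ereal a))"

text \<open>Quasi-derivative u^[1] = p u'.\<close>
definition qder :: "(real \<Rightarrow> real) \<Rightarrow> (real \<Rightarrow> complex) \<Rightarrow> real \<Rightarrow> complex" where
  "qder p w x = complex_of_real (p x) * vector_derivative w (at x)"

text \<open>w solves  -(1/r)(p w')' = \<lambda> w  on (a,b), i.e. (p w')' = - \<lambda> r w.
  (Classical solution; since r is continuous this is equivalent to the
  locally-absolutely-continuous/a.e. notion.)\<close>
definition is_solution :: "ereal \<Rightarrow> ereal \<Rightarrow> (real \<Rightarrow> real) \<Rightarrow> (real \<Rightarrow> real) \<Rightarrow> complex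
    \<Rightarrow> (real \<Rightarrow> complex) \<Rightarrow> bool" where
  "is_solution a b p r lam w \<longleftrightarrow>
     (\<forall>x\<in>ivl a b. w differentiable (at x) \<and>
        (qder p w has_vector_derivative (- (lam * complex_of_real (r x) * w x))) (at x))"

definition entire_exp_type :: "(complex \<Rightarrow> complex) \<Rightarrow> bool" where
  "entire_exp_type f \<longleftrightarrow> f holomorphic_on UNIV \<and>
     (\<exists>A B. \<forall>z. norm (f z) \<le> A * exp (B * norm z))"

end

theory Submission
  imports Defs
begin

text \<open>Successive approximation. The integrability hypothesis amounts to saying that
  \<open>R t = \<integral>\<^sub>a\<^sup>t r\<close> and \<open>K t = \<integral>\<^sub>a\<^sup>t R / p\<close> are finite; both are nondecreasing and
  vanish at \<open>a\<close>. The boundary value problem is equivalent to the Volterra equation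
  \<open>w x = 1 - \<lambda> \<integral>\<^sub>a\<^sup>x (1 / p t) \<integral>\<^sub>a\<^sup>t r s w s ds dt\<close>, whose iterates \<open>phi n\<close>
  obey \<open>\<bar>phi n\<bar> \<le> K\<^sup>n / n!\<close>. Hence \<open>W \<lambda> = \<Sum>n. (-\<lambda>)\<^sup>n phi n\<close> converges locally
  uniformly, solves the problem, and is entire in \<open>\<lambda>\<close> with \<open>\<bar>W \<lambda> x\<bar> \<le> exp (\<bar>\<lambda>\<bar> K x)\<close>.
  Iterating the same estimate on the difference \<open>u\<close> of two solutions gives
  \<open>\<bar>u\<bar> \<le> M (\<bar>\<lambda>\<bar> K)\<^sup>n / n!\<close> for every \<open>n\<close>, hence uniqueness.\<close>

lemma ivl_eq_einterval: "ivl a b = einterval a b"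
  by (simp add: ivl_def einterval_def)

lemma at_left_end_eq_filtermap: "a \<noteq> \<infinity> \<Longrightarrow> at_left_end a = filtermap real_of_ereal (at_right a)"
proof (cases a)
  case (real r)
  then show ?thesis
    by (simp add: at_left_end_def at_right_ereal filtermap_filtermap filtermap_ident o_def)
next
  case MInf
  then show ?thesis
    by (simp add: at_left_end_def at_right_MInf filtermap_filtermap filtermap_ident o_def)
qed auto

lemma tendsto_at_left_end_iff:
  "a \<noteq> \<infinity> \<Longrightarrow> (f \<longlongrightarrow> L) (at_left_end a) \<longleftrightarrow> ((f \<circ> real_of_ereal) \<longlongrightarrow> L) (at_right a)"
  by (simp add: at_left_end_eq_filtermap tendsto_compose_filtermap)

lemma at_left_end_neq_bot: "at_left_end a \<noteq> bot"
  by (simp add: at_left_end_def)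

lemma has_vector_derivative_suminf:
  fixes f f' :: "nat \<Rightarrow> real \<Rightarrow> 'a::banach"
  assumes "convex S"
    and deriv: "\<And>n t. t \<in> S \<Longrightarrow> (f n has_vector_derivative f' n t) (at t within S)"
    and unif: "uniform_limit S (\<lambda>n t. \<Sum>i<n. f' i t) g' sequentially"
    and x: "x \<in> S" and summable: "summable (\<lambda>n. f n x)"
  shows "((\<lambda>t. \<Sum>n. f n t) has_vector_derivative g' x) (at x within S)"
proof -
  have "\<exists>g. \<forall>t\<in>S. (\<lambda>n. f n t) sums g t \<and> (g has_derivative (\<lambda>h. h *\<^sub>R g' t)) (at t within S)"
  proof (rule has_derivative_series[OF \<open>convex S\<close> _ _ x])
    show "(f n has_derivative (\<lambda>h. h *\<^sub>R f' n t)) (at t within S)" if "t \<in> S" for n t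
      using deriv[OF that] by (simp add: has_vector_derivative_def)
    show "\<forall>\<^sub>F n in sequentially. \<forall>t\<in>S. \<forall>h. norm ((\<Sum>i<n. h *\<^sub>R f' i t) - h *\<^sub>R g' t) \<le> e * norm h"
      if "e > 0" for e
      using uniform_limitD[OF unif \<open>e > 0\<close>]
    proof eventually_elim
      case (elim n)
      show ?case
      proof (intro ballI allI)
        fix t h assume "t \<in> S"
        have "norm ((\<Sum>i<n. h *\<^sub>R f' i t) - h *\<^sub>R g' t) = norm (h *\<^sub>R ((\<Sum>i<n. f' i t) - g' t))"
          by (simp add: scaleR_sum_right scaleR_diff_right)
        also have "\<dots> = \<bar>h\<bar> * norm ((\<Sum>i<n. f' i t) - g' t)"
          by simp
        also have "\<dots> \<le> \<bar>h\<bar> * e"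
          using elim \<open>t \<in> S\<close> by (intro mult_left_mono) (auto simp: dist_norm)
        finally show "norm ((\<Sum>i<n. h *\<^sub>R f' i t) - h *\<^sub>R g' t) \<le> e * norm h"
          by (simp add: mult.commute)
      qed
    qed
    show "(\<lambda>n. f n x) sums (\<Sum>n. f n x)"
      using summable by (simp add: summable_sums)
  qed
  then obtain g where g: "\<And>t. t \<in> S \<Longrightarrow> (\<lambda>n. f n t) sums g t"
    "\<And>t. t \<in> S \<Longrightarrow> (g has_derivative (\<lambda>h. h *\<^sub>R g' t)) (at t within S)"
    by blast
  have "((\<lambda>t. \<Sum>n. f n t) has_derivative (\<lambda>h. h *\<^sub>R g' x)) (at x within S)"
    by (rule has_derivative_transform[OF x _ g(2)[OF x]]) (use g(1) in \<open>simp add: sums_iff\<close>)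
  then show ?thesis
    by (simp add: has_vector_derivative_def)
qed

lemma exp_series_sums: "(\<lambda>n. c ^ n / fact n) sums exp (c :: real)"
  using exp_converges[of c] by (simp add: divide_inverse mult.commute)

lemma exp_series_summable: "summable (\<lambda>n. (c :: real) ^ n / fact n)"
  using exp_series_sums sums_summable by blast

lemma tendsto_real_of_ereal_at_left:
  assumes "isCont F t"
  shows "((F \<circ> real_of_ereal) \<longlongrightarrow> F t) (at_left (ereal t))"
proof -
  have "(F \<longlongrightarrow> F t) (at_left t)"
    using assms unfolding isCont_def by (rule filterlim_mono[OF _ order_refl at_le[OF subset_UNIV]])
  then show ?thesis
    by (simp add: ereal_tendsto_simps1)
qed

locale ereal_interval =
  fixes a b :: ereal
  assumes a_less_b: "a < b"
begin

abbreviation I :: "real set" where "I \<equiv> einterval a b"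

lemma a_neq_infinity: "a \<noteq> \<infinity>"
  using a_less_b by auto

lemma einterval_left_subset: "x \<in> I \<Longrightarrow> einterval a x \<subseteq> I"
  by (auto simp: einterval_def) (metis less_ereal.simps(1) less_trans)

lemma Icc_subset_einterval: "s \<in> I \<Longrightarrow> t \<in> I \<Longrightarrow> {s..t} \<subseteq> I"
  by (auto simp: einterval_def)
    (meson ereal_less_eq(3) order_less_le_trans, meson ereal_less_eq(3) order.strict_trans1)

lemma einterval_neighbourhood:
  assumes "x \<in> I"
  obtains d e where "d \<in> I" "e \<in> I" "d < x" "x < e"
proof -
  from assms have ax: "a < ereal x" and xb: "ereal x < b"
    by (auto simp: einterval_def)
  obtain d where d: "a < ereal d" "ereal d < ereal x"
    using ereal_dense2[OF ax] by blast
  obtain e where e: "ereal x < ereal e" "ereal e < b"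
    using ereal_dense2[OF xb] by blast
  have "d \<in> I" "e \<in> I"
    using d e ax xb by (auto simp: einterval_def) (metis less_ereal.simps(1) less_trans)+
  with d e show ?thesis
    using that by simp
qed

lemma set_borel_measurable_einterval_left:
  fixes f :: "real \<Rightarrow> 'a::{banach, second_countable_topology}"
  assumes "\<And>x. x \<in> I \<Longrightarrow> isCont f x" and "t \<in> I"
  shows "set_borel_measurable lborel (einterval a t) f"
proof -
  have "continuous_on (einterval a t) f"
    using assms einterval_left_subset by (intro continuous_at_imp_continuous_on) auto
  then show ?thesis
    by (simp add: set_borel_measurable_def set_measurable_continuous_on[unfolded set_borel_measurable_def])
qed

lemma set_integrable_einterval_left_extend:
  fixes f :: "real \<Rightarrow> 'a::{banach, second_countable_topology}"
  assumes cont: "\<And>x. x \<in> I \<Longrightarrow> isCont f x"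
    and c: "c \<in> I" and int: "set_integrable lborel (einterval a c) f"
    and t: "t \<in> I"
  shows "set_integrable lborel (einterval a t) f"
proof (cases "t \<le> c")
  case True
  show ?thesis
    by (rule set_integrable_subset[OF int])
      (use True in \<open>auto simp: einterval_def intro: order_less_le_trans\<close>)
next
  case False
  have "set_integrable lborel {c..t} f"
    using Icc_subset_einterval[OF c t] cont
    by (intro borel_integrable_atLeastAtMost' continuous_at_imp_continuous_on) auto
  then have "set_integrable lborel (einterval a c \<union> {c..t}) f"
    using int by (intro set_integrable_Un) auto
  then show ?thesis
    by (rule set_integrable_subset) (auto simp: einterval_def)
qed

lemma left_integral_has_vector_derivative:
  fixes f :: "real \<Rightarrow> 'a::euclidean_space"
  assumes cont: "\<And>x. x \<in> I \<Longrightarrow> isCont f x"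
    and int: "\<And>t. t \<in> I \<Longrightarrow> set_integrable lborel (einterval a t) f"
    and x: "x \<in> I"
  shows "((\<lambda>t. LBINT s=a..t. f s) has_vector_derivative f x) (at x)"
proof -
  obtain d e where de: "d \<in> I" "e \<in> I" "d < x" "x < e"
    using einterval_neighbourhood[OF x] .
  have ad: "a < ereal d"
    using de(1) by (simp add: einterval_def)
  have "continuous_on {d..e} f"
    using Icc_subset_einterval[OF de(1,2)] cont by (intro continuous_at_imp_continuous_on) auto
  then have "((\<lambda>u. LBINT y=d..u. f y) has_vector_derivative f x) (at x within {d..e})"
    using de by (intro interval_integral_FTC2) auto
  then have "((\<lambda>u. LBINT y=d..u. f y) has_vector_derivative f x) (at x)"
    using de by (simp add: at_within_Icc_at)
  then have D: "((\<lambda>u. (LBINT y=a..d. f y) + (LBINT y=d..u. f y)) has_vector_derivative f x) (at x)"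
    by (auto intro!: derivative_eq_intros)
  show ?thesis
  proof (rule has_vector_derivative_transform_within_open[OF D, of "{d<..<e}"])
    fix y assume y: "y \<in> {d<..<e}"
    then have mI: "max d y \<in> I"
      using Icc_subset_einterval[OF de(1,2)] de(1) by (auto simp: max_def)
    have "a \<le> ereal (max d y)"
      using ad by (metis less_imp_le max.cobounded1 ereal_less_eq(3) order_trans)
    then have "interval_lebesgue_integrable lborel a (ereal (max d y)) f"
      using int[OF mI] unfolding interval_lebesgue_integrable_def by simp
    moreover have "min a (min (ereal d) (ereal y)) = a" "max a (max (ereal d) (ereal y)) = ereal (max d y)"
      using ad y less_trans[OF ad, of "ereal y"] by (auto simp: min_def max_def)
    ultimately show "(LBINT y=a..d. f y) + (LBINT y=d..y. f y) = (LBINT s=a..y. f s)"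
      by (intro interval_integral_sum) simp
  qed (use de in auto)
qed

lemma left_integral_tendsto_0:
  fixes f :: "real \<Rightarrow> 'a::{banach, second_countable_topology}"
  assumes c: "c \<in> I" and int: "set_integrable lborel (einterval a c) f"
  shows "((\<lambda>t. LBINT s=a..t. f s) \<longlongrightarrow> 0) (at_left_end a)"
  unfolding tendsto_at_left_end_iff[OF a_neq_infinity]
proof (rule tendsto_at_right_sequentially[of a "ereal c"], goal_cases)
  case 1
  show ?case
    using c by (simp add: einterval_def)
next
  case (2 S)
  note S = this
  have eq: "(LBINT s=a..ereal (real_of_ereal (S n)). f s) = (LINT s:einterval a (S n)|lborel. f s)" for n
    using S(1,2)[of n] by (cases "S n") (auto simp: interval_lebesgue_integral_le_eq)
  have "(\<Inter>n. einterval a (S n)) = {}"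
  proof (intro equals0I)
    fix s assume "s \<in> (\<Inter>n. einterval a (S n))"
    then have "a < ereal s" "\<And>n. ereal s < S n"
      by (auto simp: einterval_def)
    with order_tendstoD(2)[OF S(4)] show False
      by (metis eventually_sequentially le_refl order.asym)
  qed
  moreover have "(\<lambda>n. LINT s:einterval a (S n)|lborel. f s) \<longlonglongrightarrow> (LINT s:(\<Inter>n. einterval a (S n))|lborel. f s)"
  proof (rule set_integral_cont_down)
    show "decseq (\<lambda>n. einterval a (S n))"
      using S(3) by (auto simp: decseq_def einterval_def intro: order_less_le_trans)
    show "set_integrable lborel (einterval a (S 0)) f"
      by (rule set_integrable_subset[OF int])
        (use S(2)[of 0] in \<open>auto simp: einterval_def dest: less_trans\<close>)
  qed auto
  ultimately have "(\<lambda>n. LINT s:einterval a (S n)|lborel. f s) \<longlonglongrightarrow> 0"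
    by (simp add: set_lebesgue_integral_def)
  then show ?case
    by (simp add: eq)
qed

lemma eventually_at_left_end_below:
  assumes t: "t \<in> I"
  shows "eventually (\<lambda>s. s \<in> I \<and> s < t) (at_left_end a)"
proof -
  have at: "a < ereal t"
    using t by (auto simp: einterval_def)
  have "\<forall>y>a. y < ereal t \<longrightarrow> real_of_ereal y \<in> I \<and> real_of_ereal y < t"
  proof (intro allI impI)
    fix y assume y: "a < y" "y < ereal t"
    then have "y = ereal (real_of_ereal y)"
      by (cases y) auto
    with y t show "real_of_ereal y \<in> I \<and> real_of_ereal y < t"
      by (auto simp: einterval_def) (metis less_ereal.simps(1))
  qed
  then show ?thesis
    unfolding at_left_end_eq_filtermap[OF a_neq_infinity] eventually_filtermap
    using at by (subst eventually_at_right[OF at]) blast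
qed

lemma eventually_at_left_end_obtain:
  assumes ev: "eventually P (at_left_end a)" and t: "t \<in> I"
  obtains d where "d \<in> I" "d \<le> t" "\<And>s. s \<in> I \<Longrightarrow> s < d \<Longrightarrow> P s"
proof -
  have at: "a < ereal t"
    using t by (auto simp: einterval_def)
  from ev obtain b' where b': "a < b'" "\<And>y. a < y \<Longrightarrow> y < b' \<Longrightarrow> P (real_of_ereal y)"
    unfolding at_left_end_eq_filtermap[OF a_neq_infinity] eventually_filtermap
    by (subst (asm) eventually_at_right[OF at]) blast
  have "a < min b' (ereal t)"
    using b' at by simp
  then obtain d where d: "a < ereal d" "ereal d < min b' (ereal t)"
    using ereal_dense2 by blast
  have "d \<in> I"
    using d t by (auto simp: einterval_def) (meson ereal_less_eq(3) less_imp_le order_le_less_trans)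
  moreover have "P s" if "s \<in> I" "s < d" for s
    using that d b'(2)[of "ereal s"] by (auto simp: einterval_def) (meson ereal_less_eq(3) less_imp_le order_le_less_trans)
  ultimately show ?thesis
    using that d by force
qed

lemma mono_if_deriv_nonneg:
  fixes F :: "real \<Rightarrow> real"
  assumes deriv: "\<And>x. x \<in> I \<Longrightarrow> (F has_real_derivative F' x) (at x)"
    and nonneg: "\<And>x. x \<in> I \<Longrightarrow> F' x \<ge> 0"
    and s: "s \<in> I" and t: "t \<in> I" and "s \<le> t"
  shows "F s \<le> F t"
proof (rule DERIV_nonneg_imp_increasing_open[OF \<open>s \<le> t\<close>])
  have sub: "{s..t} \<subseteq> I"
    by (rule Icc_subset_einterval[OF s t])
  fix x assume "s < x" "x < t"
  then have "x \<in> I"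
    using sub by auto
  then show "\<exists>y. (F has_real_derivative y) (at x) \<and> 0 \<le> y"
    using deriv nonneg by blast
next
  show "continuous_on {s..t} F"
    using Icc_subset_einterval[OF s t] deriv by (auto intro!: continuous_at_imp_continuous_on DERIV_isCont)
qed

lemma nonneg_if_mono_tendsto_0:
  fixes F :: "real \<Rightarrow> real"
  assumes mono: "\<And>s t. s \<in> I \<Longrightarrow> t \<in> I \<Longrightarrow> s \<le> t \<Longrightarrow> F s \<le> F t"
    and lim: "(F \<longlongrightarrow> 0) (at_left_end a)" and t: "t \<in> I"
  shows "0 \<le> F t"
proof (rule tendsto_le[OF at_left_end_neq_bot tendsto_const lim])
  show "\<forall>\<^sub>F s in at_left_end a. F s \<le> F t"
    using eventually_at_left_end_below[OF t] by eventually_elim (use mono t in auto)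
qed

lemma norm_left_integral_le:
  fixes f :: "real \<Rightarrow> complex" and g :: "real \<Rightarrow> real"
  assumes f: "set_integrable lborel (einterval a t) f" and g: "set_integrable lborel (einterval a t) g"
    and le: "\<And>s. s \<in> einterval a t \<Longrightarrow> norm (f s) \<le> g s" and at: "a < ereal t"
  shows "norm (LBINT s=a..t. f s) \<le> (LBINT s=a..t. g s)"
proof -
  have "norm (LBINT s=a..t. f s) = norm (LINT s:einterval a t|lborel. f s)"
    using at by (simp add: interval_lebesgue_integral_le_eq less_imp_le)
  also have "\<dots> \<le> (LINT s:einterval a t|lborel. norm (f s))"
    by (rule set_integral_norm_bound[OF f])
  also have "\<dots> \<le> (LINT s:einterval a t|lborel. g s)"
    by (rule set_integral_mono) (use f g le in \<open>auto intro: set_integrable_norm\<close>)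
  also have "\<dots> = (LBINT s=a..t. g s)"
    using at by (simp add: interval_lebesgue_integral_le_eq less_imp_le)
  finally show ?thesis .
qed

lemma left_integral_eq_antiderivative:
  fixes F f :: "real \<Rightarrow> complex"
  assumes deriv: "\<And>x. x \<in> I \<Longrightarrow> (F has_vector_derivative f x) (at x)"
    and cont: "\<And>x. x \<in> I \<Longrightarrow> isCont f x" and lim: "(F \<longlongrightarrow> 0) (at_left_end a)"
    and t: "t \<in> I" and int: "set_integrable lborel (einterval a t) f"
  shows "(LBINT s=a..t. f s) = F t"
proof -
  have at: "a < ereal t"
    using t by (auto simp: einterval_def)
  have sub: "x \<in> I" if "a < ereal x" "ereal x < ereal t" for x
    using einterval_left_subset[OF t] that by (auto simp: einterval_def)
  have "((F \<circ> real_of_ereal) \<longlongrightarrow> F t) (at_left (ereal t))"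
    using has_vector_derivative_continuous[OF deriv[OF t]] by (intro tendsto_real_of_ereal_at_left) simp
  moreover have "((F \<circ> real_of_ereal) \<longlongrightarrow> 0) (at_right a)"
    using lim by (simp add: tendsto_at_left_end_iff[OF a_neq_infinity])
  ultimately have "(LBINT s=a..ereal t. f s) = F t - 0"
    using deriv cont sub by (intro interval_integral_FTC_integrable[OF at _ _ int]) auto
  then show ?thesis
    by simp
qed

lemma left_integral_eq_nonneg_antiderivative:
  fixes F f :: "real \<Rightarrow> real"
  assumes deriv: "\<And>x. x \<in> I \<Longrightarrow> (F has_real_derivative f x) (at x)"
    and cont: "\<And>x. x \<in> I \<Longrightarrow> isCont f x" and nonneg: "\<And>x. x \<in> I \<Longrightarrow> 0 \<le> f x"
    and lim: "(F \<longlongrightarrow> 0) (at_left_end a)" and t: "t \<in> I"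
  shows "set_integrable lborel (einterval a t) f"
    and "(LBINT s=a..t. f s) = F t"
proof -
  have at: "a < ereal t"
    using t by (auto simp: einterval_def)
  have sub: "x \<in> I" if "a < ereal x" "ereal x < ereal t" for x
    using einterval_left_subset[OF t] that by (auto simp: einterval_def)
  have right: "((F \<circ> real_of_ereal) \<longlongrightarrow> F t) (at_left (ereal t))"
    using DERIV_isCont[OF deriv[OF t]] by (rule tendsto_real_of_ereal_at_left)
  have left: "((F \<circ> real_of_ereal) \<longlongrightarrow> 0) (at_right a)"
    using lim by (simp add: tendsto_at_left_end_iff[OF a_neq_infinity])
  have "AE x in lborel. a < ereal x \<longrightarrow> ereal x < ereal t \<longrightarrow> 0 \<le> f x"
    using sub nonneg by (intro AE_I2) blast
  note FTC = interval_integral_FTC_nonneg[OF at _ _ this left right]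
  show "set_integrable lborel (einterval a t) f"
    using sub deriv cont by (intro FTC(1)) auto
  show "(LBINT s=a..t. f s) = F t"
    using sub deriv cont FTC(2) by simp
qed

lemma bounded_near_left_end:
  fixes u :: "real \<Rightarrow> 'a::real_normed_vector"
  assumes cont: "\<And>t. t \<in> I \<Longrightarrow> isCont u t" and lim: "(u \<longlongrightarrow> 0) (at_left_end a)" and x: "x \<in> I"
  obtains M where "0 \<le> M" "\<And>t. t \<in> I \<Longrightarrow> t \<le> x \<Longrightarrow> norm (u t) \<le> M"
proof -
  have "eventually (\<lambda>t. norm (u t) < 1) (at_left_end a)"
    using tendstoD[OF lim, of 1] by simp
  then obtain d where d: "d \<in> I" "d \<le> x" "\<And>t. t \<in> I \<Longrightarrow> t < d \<Longrightarrow> norm (u t) < 1"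
    using eventually_at_left_end_obtain[OF _ x] by metis
  have "continuous_on {d..x} u"
    using Icc_subset_einterval[OF d(1) x] cont by (intro continuous_at_imp_continuous_on) auto
  then have "bounded (u ` {d..x})"
    by (intro compact_imp_bounded compact_continuous_image compact_Icc)
  then obtain M' where M': "\<And>t. t \<in> {d..x} \<Longrightarrow> norm (u t) \<le> M'"
    unfolding bounded_iff by blast
  have "norm (u t) \<le> max 1 M'" if "t \<in> I" "t \<le> x" for t
    using d(3)[OF that(1)] M'[of t] that(2) by (cases "t < d") auto
  then show ?thesis
    using that[of "max 1 M'"] by simp
qed

lemma series_has_vector_derivative:
  fixes f f' :: "nat \<Rightarrow> real \<Rightarrow> 'a::banach"
  assumes deriv: "\<And>n x. x \<in> I \<Longrightarrow> (f n has_vector_derivative f' n x) (at x)"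
    and local_bound: "\<And>d e. d \<in> I \<Longrightarrow> e \<in> I \<Longrightarrow>
       \<exists>M. summable M \<and> (\<forall>n. \<forall>t\<in>{d..e}. norm (f' n t) \<le> M n)"
    and summable: "\<And>x. x \<in> I \<Longrightarrow> summable (\<lambda>n. f n x)"
    and x: "x \<in> I"
  shows "((\<lambda>t. \<Sum>n. f n t) has_vector_derivative (\<Sum>n. f' n x)) (at x)"
proof -
  obtain d e where de: "d \<in> I" "e \<in> I" "d < x" "x < e"
    using einterval_neighbourhood[OF x] .
  have sub: "{d..e} \<subseteq> I"
    by (rule Icc_subset_einterval[OF de(1,2)])
  obtain M where "summable M" "\<And>n t. t \<in> {d..e} \<Longrightarrow> norm (f' n t) \<le> M n"
    using local_bound[OF de(1,2)] by blast
  then have "uniform_limit {d..e} (\<lambda>n t. \<Sum>i<n. f' i t) (\<lambda>t. \<Sum>i. f' i t) sequentially"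
    by (intro Weierstrass_m_test)
  moreover have "(f n has_vector_derivative f' n t) (at t within {d..e})" if "t \<in> {d..e}" for n t
    using deriv[of t n] sub that by (blast intro: has_vector_derivative_at_within)
  ultimately have "((\<lambda>t. \<Sum>n. f n t) has_vector_derivative (\<Sum>n. f' n x)) (at x within {d..e})"
    using de summable[OF x] by (intro has_vector_derivative_suminf) auto
  then show ?thesis
    using de by (simp add: at_within_Icc_at)
qed

end

locale sturm_liouville = ereal_interval +
  fixes p r :: "real \<Rightarrow> real"
  assumes p_pos: "\<And>x. x \<in> I \<Longrightarrow> p x > 0"
    and r_pos: "\<And>x. x \<in> I \<Longrightarrow> r x > 0"
    and p_cont: "\<And>x. x \<in> I \<Longrightarrow> isCont p x"
    and r_cont: "\<And>x. x \<in> I \<Longrightarrow> isCont r x"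
begin

lemma p_bounded_below_on_Icc:
  assumes "d \<in> I" "e \<in> I"
  obtains m where "0 < m" "\<And>t. t \<in> {d..e} \<Longrightarrow> m \<le> p t"
proof (cases "d \<le> e")
  case True
  have "continuous_on {d..e} p"
    using Icc_subset_einterval[OF assms] p_cont by (intro continuous_at_imp_continuous_on) auto
  then obtain y where y: "y \<in> {d..e}" "\<And>t. t \<in> {d..e} \<Longrightarrow> p y \<le> p t"
    using continuous_attains_inf[OF compact_Icc] True by (metis atLeastAtMost_iff order_refl empty_iff)
  moreover have "0 < p y"
    using p_pos Icc_subset_einterval[OF assms] y(1) by blast
  ultimately show ?thesis
    using that by blast
next
  case False
  then show ?thesis
    using that[of 1] by simp
qed

lemma r_bounded_above_on_Icc:
  assumes "d \<in> I" "e \<in> I"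
  obtains m where "\<And>t. t \<in> {d..e} \<Longrightarrow> r t \<le> m"
proof -
  have "continuous_on {d..e} r"
    using Icc_subset_einterval[OF assms] r_cont by (intro continuous_at_imp_continuous_on) auto
  then have "bounded (r ` {d..e})"
    by (intro compact_imp_bounded compact_continuous_image compact_Icc)
  then obtain m where "\<forall>y\<in>r ` {d..e}. norm y \<le> m"
    unfolding bounded_iff by blast
  then show ?thesis
    using that by (metis abs_le_D1 image_eqI real_norm_def)
qed

definition Phi :: "real \<Rightarrow> real" where
  "Phi = (SOME \<Phi>. \<forall>x\<in>I. (\<Phi> has_real_derivative 1 / p x) (at x))"

lemma Phi_deriv: "x \<in> I \<Longrightarrow> (Phi has_real_derivative 1 / p x) (at x)"
proof -
  have "isCont (\<lambda>x. 1 / p x) x" if "x \<in> I" for x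
    using p_cont[OF that] p_pos[OF that] by (intro continuous_intros) auto
  then obtain \<Phi> :: "real \<Rightarrow> real"
    where "\<forall>x. a < x \<longrightarrow> x < b \<longrightarrow> (\<Phi> has_vector_derivative 1 / p x) (at x)"
    using einterval_antiderivative[OF a_less_b, of "\<lambda>x. 1 / p x"] by (auto simp: einterval_def)
  then have "\<exists>\<Phi>. \<forall>x\<in>I. (\<Phi> has_real_derivative 1 / p x) (at x)"
    by (auto simp: einterval_def has_real_derivative_iff_has_vector_derivative)
  from someI_ex[OF this] show "x \<in> I \<Longrightarrow> ?thesis"
    unfolding Phi_def by blast
qed

lemma Phi_strict_mono:
  assumes s: "s \<in> I" and t: "t \<in> I" and "s < t"
  shows "Phi s < Phi t"
proof (rule DERIV_pos_imp_increasing[OF \<open>s < t\<close>])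
  fix x assume "s \<le> x" "x \<le> t"
  then have "x \<in> I"
    using Icc_subset_einterval[OF s t] by auto
  then show "\<exists>y. DERIV Phi x :> y \<and> 0 < y"
    using Phi_deriv p_pos by (intro exI[of _ "1 / p x"]) simp
qed

lemma Phi_mono: "s \<in> I \<Longrightarrow> t \<in> I \<Longrightarrow> s \<le> t \<Longrightarrow> Phi s \<le> Phi t"
  using Phi_strict_mono by (cases "s = t") (auto intro: less_imp_le)

lemma integral_inverse_p:
  assumes y: "y \<in> I" and c: "c \<in> I" and "y \<le> c"
  shows "integral {y..c} (\<lambda>x. 1 / p x) = Phi c - Phi y"
proof (rule integral_unique, rule fundamental_theorem_of_calculus[OF \<open>y \<le> c\<close>])
  fix x assume "x \<in> {y..c}"
  then have "x \<in> I"
    using Icc_subset_einterval[OF y c] by auto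
  then show "(Phi has_vector_derivative 1 / p x) (at x within {y..c})"
    using Phi_deriv by (auto intro: has_vector_derivative_at_within simp: has_real_derivative_iff_has_vector_derivative)
qed

lemma weighted_r_integrable:
  assumes c: "c \<in> I"
    and fin: "(\<integral>\<^sup>+ y. ennreal (indicator {y. a < ereal y \<and> y < c} y *
            (integral {y..c} (\<lambda>x. 1 / p x) * r y)) \<partial>lborel) < \<infinity>"
  shows "set_integrable lborel (einterval a c) (\<lambda>y. (Phi c - Phi y) * r y)"
  unfolding set_integrable_def
proof (rule integrableI_nonneg)
  have below_c: "y \<in> I" "y \<le> c" if "y \<in> einterval a c" for y
    using that einterval_left_subset[OF c] by (auto simp: einterval_def)
  have "isCont (\<lambda>y. (Phi c - Phi y) * r y) x" if "x \<in> I" for x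
    using DERIV_isCont[OF Phi_deriv[OF that]] r_cont[OF that] by (intro continuous_intros) auto
  from set_borel_measurable_einterval_left[OF this c]
  show "(\<lambda>y. indicat_real (einterval a c) y *\<^sub>R ((Phi c - Phi y) * r y)) \<in> borel_measurable lborel"
    by (simp add: set_borel_measurable_def)
  show "AE y in lborel. 0 \<le> indicat_real (einterval a c) y *\<^sub>R ((Phi c - Phi y) * r y)"
    using below_c Phi_mono[OF _ c] r_pos by (intro AE_I2) (auto simp: indicator_def less_imp_le)
  have "(\<integral>\<^sup>+ y. ennreal (indicat_real (einterval a c) y *\<^sub>R ((Phi c - Phi y) * r y)) \<partial>lborel) =
    (\<integral>\<^sup>+ y. ennreal (indicator {y. a < ereal y \<and> y < c} y * (integral {y..c} (\<lambda>x. 1 / p x) * r y)) \<partial>lborel)"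
    using below_c integral_inverse_p[OF _ c]
    by (intro nn_integral_cong) (auto simp: indicator_def einterval_def)
  with fin show "(\<integral>\<^sup>+ y. ennreal (indicat_real (einterval a c) y *\<^sub>R ((Phi c - Phi y) * r y)) \<partial>lborel) < \<infinity>"
    by simp
qed

text \<open>Away from \<open>c\<close> the weight \<open>Phi c - Phi y\<close> is bounded below by a positive constant.\<close>

lemma r_integrable_if_weighted:
  assumes c: "c \<in> I" and int: "set_integrable lborel (einterval a c) (\<lambda>y. (Phi c - Phi y) * r y)"
  shows "\<exists>c'\<in>I. set_integrable lborel (einterval a c') r"
proof -
  have "a < ereal c"
    using c by (simp add: einterval_def)
  then obtain c' where c': "a < ereal c'" "c' < c"
    using ereal_dense2 by force
  then have c'I: "c' \<in> I"
    using c by (auto simp: einterval_def) (metis less_ereal.simps(1) less_trans)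
  define k where "k = Phi c - Phi c'"
  have k: "0 < k"
    using Phi_strict_mono[OF c'I c c'(2)] by (simp add: k_def)
  have "set_integrable lborel (einterval a c') r"
  proof (rule set_integrable_bound[OF _ set_borel_measurable_einterval_left[OF r_cont c'I]])
    have "set_integrable lborel (einterval a c') (\<lambda>y. (Phi c - Phi y) * r y)"
      by (rule set_integrable_subset[OF int]) (use c' in \<open>auto simp: einterval_def\<close>)
    then show "set_integrable lborel (einterval a c') (\<lambda>y. (Phi c - Phi y) * r y / k)"
      by simp
    show "AE y in lborel. y \<in> einterval a c' \<longrightarrow> norm (r y) \<le> norm ((Phi c - Phi y) * r y / k)"
    proof (intro AE_I2 impI)
      fix y assume "y \<in> einterval a c'"
      then have y: "y \<in> I" "y \<le> c'"
        using einterval_left_subset[OF c'I] by (auto simp: einterval_def)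
      have "k * r y \<le> (Phi c - Phi y) * r y"
        using Phi_mono[OF y(1) c'I y(2)] r_pos[OF y(1)] by (intro mult_right_mono) (auto simp: k_def)
      with k r_pos[OF y(1)] show "norm (r y) \<le> norm ((Phi c - Phi y) * r y / k)"
        by (simp add: field_simps)
    qed
  qed
  with c'I show ?thesis
    by blast
qed

end

locale sturm_liouville_R = sturm_liouville +
  assumes r_integrable_near_a: "\<exists>c\<in>I. set_integrable lborel (einterval a c) r"
begin

definition R :: "real \<Rightarrow> real" where
  "R t = (LBINT s=a..t. r s)"

lemma r_integrable: "t \<in> I \<Longrightarrow> set_integrable lborel (einterval a t) r"
  using r_integrable_near_a set_integrable_einterval_left_extend[OF r_cont] by blast

lemma R_deriv: "t \<in> I \<Longrightarrow> (R has_real_derivative r t) (at t)"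
  unfolding R_def[abs_def] has_real_derivative_iff_has_vector_derivative
  by (rule left_integral_has_vector_derivative[OF r_cont r_integrable])

lemma R_cont: "t \<in> I \<Longrightarrow> isCont R t"
  by (rule DERIV_isCont[OF R_deriv])

lemma R_tendsto_0: "(R \<longlongrightarrow> 0) (at_left_end a)"
  using r_integrable_near_a left_integral_tendsto_0 unfolding R_def[abs_def] by blast

lemma R_mono: "s \<in> I \<Longrightarrow> t \<in> I \<Longrightarrow> s \<le> t \<Longrightarrow> R s \<le> R t"
  by (rule mono_if_deriv_nonneg[OF R_deriv]) (simp_all add: less_imp_le r_pos)

lemma R_nonneg: "t \<in> I \<Longrightarrow> 0 \<le> R t"
  by (rule nonneg_if_mono_tendsto_0[OF R_mono R_tendsto_0])

lemma R_div_p_cont: "t \<in> I \<Longrightarrow> isCont (\<lambda>s. R s / p s) t"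
  using R_cont p_cont p_pos by (intro continuous_intros) (auto simp: less_imp_neq[symmetric])

lemma R_mult_Phi_le_weighted_integral:
  assumes c: "c \<in> I" and int: "set_integrable lborel (einterval a c) (\<lambda>y. (Phi c - Phi y) * r y)"
    and y: "y \<in> I" "y \<le> c"
  shows "R y * (Phi c - Phi y) \<le> (LBINT s=a..y. (Phi c - Phi s) * r s)"
proof -
  have ay: "a < ereal y"
    using y by (simp add: einterval_def)
  have "R y * (Phi c - Phi y) = (LINT s:einterval a y|lborel. (Phi c - Phi y) * r s)"
    using ay by (simp add: R_def mult.commute interval_lebesgue_integral_le_eq less_imp_le)
  also have "\<dots> \<le> (LINT s:einterval a y|lborel. (Phi c - Phi s) * r s)"
  proof (rule set_integral_mono)
    show "set_integrable lborel (einterval a y) (\<lambda>s. (Phi c - Phi y) * r s)"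
      using r_integrable[OF y(1)] by simp
    show "set_integrable lborel (einterval a y) (\<lambda>s. (Phi c - Phi s) * r s)"
      by (rule set_integrable_subset[OF int]) (use y in \<open>auto simp: einterval_def\<close>)
    fix s assume "s \<in> einterval a y"
    then have s: "s \<in> I" "s \<le> y"
      using einterval_left_subset[OF y(1)] by (auto simp: einterval_def)
    show "(Phi c - Phi y) * r s \<le> (Phi c - Phi s) * r s"
      using Phi_mono[OF s(1) y(1) s(2)] r_pos[OF s(1)] by (intro mult_right_mono) auto
  qed
  also have "\<dots> = (LBINT s=a..y. (Phi c - Phi s) * r s)"
    using ay by (simp add: interval_lebesgue_integral_le_eq less_imp_le)
  finally show ?thesis .
qed

lemma R_mult_Phi_diff_tendsto_0:
  assumes c: "c \<in> I" and int: "set_integrable lborel (einterval a c) (\<lambda>y. (Phi c - Phi y) * r y)"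
  shows "((\<lambda>y. R y * (Phi c - Phi y)) \<longlongrightarrow> 0) (at_left_end a)"
proof (rule tendsto_sandwich[OF _ _ tendsto_const left_integral_tendsto_0[OF c int]])
  show "\<forall>\<^sub>F y in at_left_end a. 0 \<le> R y * (Phi c - Phi y)"
    using eventually_at_left_end_below[OF c]
    by eventually_elim (use R_nonneg Phi_mono c in \<open>auto intro!: mult_nonneg_nonneg\<close>)
  show "\<forall>\<^sub>F y in at_left_end a. R y * (Phi c - Phi y) \<le> (LBINT s=a..y. (Phi c - Phi s) * r s)"
    using eventually_at_left_end_below[OF c]
    by eventually_elim (use R_mult_Phi_le_weighted_integral[OF c int] in auto)
qed

text \<open>Integration by parts: \<open>H\<close> below is an antiderivative of \<open>R / p\<close> vanishing at \<open>a\<close>.\<close>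

lemma R_div_p_integrable_if_weighted:
  assumes c: "c \<in> I" and int: "set_integrable lborel (einterval a c) (\<lambda>y. (Phi c - Phi y) * r y)"
  shows "set_integrable lborel (einterval a c) (\<lambda>t. R t / p t)"
proof (rule left_integral_eq_nonneg_antiderivative(1)[OF _ R_div_p_cont _ _ c])
  define G where "G y = (Phi c - Phi y) * r y" for y
  define H where "H y = (LBINT s=a..y. G s) - R y * (Phi c - Phi y)" for y
  have G_cont: "isCont G x" if "x \<in> I" for x
    unfolding G_def using DERIV_isCont[OF Phi_deriv[OF that]] r_cont[OF that]
    by (intro continuous_intros) auto
  have G_int: "set_integrable lborel (einterval a t) G" if "t \<in> I" for t
    using set_integrable_einterval_left_extend[OF G_cont c _ that] int by (simp add: G_def[abs_def])
  show "(H has_real_derivative R y / p y) (at y)" if y: "y \<in> I" for y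
  proof -
    have "((\<lambda>y. LBINT s=a..y. G s) has_real_derivative G y) (at y)"
      unfolding has_real_derivative_iff_has_vector_derivative
      by (rule left_integral_has_vector_derivative[OF G_cont G_int y])
    then have "(H has_real_derivative G y - (r y * (Phi c - Phi y) + (0 - 1 / p y) * R y)) (at y)"
      unfolding H_def[abs_def] by (intro DERIV_diff DERIV_mult DERIV_const R_deriv[OF y] Phi_deriv[OF y])
    then show ?thesis
      by (simp add: G_def algebra_simps)
  qed
  show "(H \<longlongrightarrow> 0) (at_left_end a)"
    using tendsto_diff[OF left_integral_tendsto_0[OF c int] R_mult_Phi_diff_tendsto_0[OF c int]]
    by (simp add: H_def[abs_def] G_def[abs_def])
  show "0 \<le> R x / p x" if "x \<in> I" for x
    using R_nonneg[OF that] p_pos[OF that] by simp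
qed

end

locale sturm_liouville_K = sturm_liouville_R +
  assumes R_div_p_integrable_near_a: "\<exists>c\<in>I. set_integrable lborel (einterval a c) (\<lambda>t. R t / p t)"
begin

definition K :: "real \<Rightarrow> real" where
  "K t = (LBINT s=a..t. R s / p s)"

lemma R_div_p_integrable: "t \<in> I \<Longrightarrow> set_integrable lborel (einterval a t) (\<lambda>s. R s / p s)"
  using R_div_p_integrable_near_a set_integrable_einterval_left_extend[OF R_div_p_cont] by blast

lemma K_deriv: "t \<in> I \<Longrightarrow> (K has_real_derivative R t / p t) (at t)"
  unfolding K_def[abs_def] has_real_derivative_iff_has_vector_derivative
  by (rule left_integral_has_vector_derivative[OF R_div_p_cont R_div_p_integrable])

lemma K_cont: "t \<in> I \<Longrightarrow> isCont K t"
  by (rule DERIV_isCont[OF K_deriv])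

lemma K_tendsto_0: "(K \<longlongrightarrow> 0) (at_left_end a)"
  using R_div_p_integrable_near_a left_integral_tendsto_0 unfolding K_def[abs_def] by blast

lemma K_mono: "s \<in> I \<Longrightarrow> t \<in> I \<Longrightarrow> s \<le> t \<Longrightarrow> K s \<le> K t"
  by (rule mono_if_deriv_nonneg[OF K_deriv]) (simp_all add: R_nonneg p_pos less_imp_le)

lemma K_nonneg: "t \<in> I \<Longrightarrow> 0 \<le> K t"
  by (rule nonneg_if_mono_tendsto_0[OF K_mono K_tendsto_0])

text \<open>The two halves of one step \<open>g \<mapsto> \<integral>\<^sub>a\<^sup>x (1 / p) \<integral>\<^sub>a\<^sup>t r g\<close> of the Volterra
  iteration, and how they propagate bounds of the form \<open>B K\<^sup>n\<close>.\<close>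

lemma r_mult_integral_estimate:
  fixes g :: "real \<Rightarrow> complex"
  assumes cont: "\<And>x. x \<in> I \<Longrightarrow> isCont g x" and "0 \<le> B"
    and bound: "\<And>s. s \<in> I \<Longrightarrow> s \<le> t \<Longrightarrow> norm (g s) \<le> B * K s ^ n" and t: "t \<in> I"
  shows "set_integrable lborel (einterval a t) (\<lambda>s. r s * g s)"
    and "norm (LBINT s=a..t. r s * g s) \<le> B * R t * K t ^ n"
proof -
  have le: "norm (r s * g s) \<le> B * K t ^ n * r s" if "s \<in> einterval a t" for s
  proof -
    have s: "s \<in> I" "s \<le> t"
      using einterval_left_subset[OF t] that by (auto simp: einterval_def)
    have "norm (r s * g s) = r s * norm (g s)"
      using r_pos[OF s(1)] by (simp add: norm_mult)
    also have "\<dots> \<le> r s * (B * K s ^ n)"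
      using bound[OF s] r_pos[OF s(1)] by (intro mult_left_mono) auto
    also have "\<dots> \<le> r s * (B * K t ^ n)"
      using r_pos[OF s(1)] \<open>0 \<le> B\<close> K_mono[OF s(1) t s(2)] K_nonneg[OF s(1)]
      by (intro mult_left_mono power_mono) auto
    finally show ?thesis
      by (simp add: algebra_simps)
  qed
  have dominating: "set_integrable lborel (einterval a t) (\<lambda>s. B * K t ^ n * r s)"
    using r_integrable[OF t] by simp
  have "\<And>x. x \<in> I \<Longrightarrow> isCont (\<lambda>s. complex_of_real (r s) * g s) x"
    using cont r_cont by (intro continuous_intros) auto
  from set_borel_measurable_einterval_left[OF this t]
  show int: "set_integrable lborel (einterval a t) (\<lambda>s. r s * g s)"
  proof (rule set_integrable_bound[OF dominating])
    show "AE s in lborel. s \<in> einterval a t \<longrightarrow> norm (r s * g s) \<le> norm (B * K t ^ n * r s)"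
      by (intro AE_I2 impI) (use le in force)
  qed
  have "norm (LBINT s=a..t. r s * g s) \<le> (LBINT s=a..t. B * K t ^ n * r s)"
    using t by (intro norm_left_integral_le[OF int dominating le]) (auto simp: einterval_def)
  then show "norm (LBINT s=a..t. r s * g s) \<le> B * R t * K t ^ n"
    by (simp add: R_def ac_simps)
qed

lemma R_div_p_mult_K_power_integral:
  assumes t: "t \<in> I"
  shows "set_integrable lborel (einterval a t) (\<lambda>s. R s / p s * K s ^ n)"
    and "(LBINT s=a..t. R s / p s * K s ^ n) = K t ^ Suc n / Suc n"
proof -
  have deriv: "((\<lambda>s. K s ^ Suc n / Suc n) has_real_derivative R x / p x * K x ^ n) (at x)" if "x \<in> I" for x
  proof -
    have "((\<lambda>s. K s ^ Suc n / Suc n) has_real_derivative Suc n * (R x / p x * K x ^ (Suc n - Suc 0)) / Suc n) (at x)"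
      by (intro DERIV_cdivide DERIV_power K_deriv[OF that])
    then show ?thesis
      by (simp del: of_nat_Suc)
  qed
  have cont: "isCont (\<lambda>s. R s / p s * K s ^ n) x" if "x \<in> I" for x
    by (rule isCont_mult[OF R_div_p_cont[OF that] isCont_power[OF K_cont[OF that]]])
  have nonneg: "0 \<le> R x / p x * K x ^ n" if "x \<in> I" for x
    using R_nonneg[OF that] K_nonneg[OF that] p_pos[OF that] by simp
  have "((\<lambda>s. K s ^ Suc n / Suc n) \<longlongrightarrow> 0 ^ Suc n / Suc n) (at_left_end a)"
    by (intro tendsto_intros K_tendsto_0) simp
  then have lim: "((\<lambda>s. K s ^ Suc n / Suc n) \<longlongrightarrow> 0) (at_left_end a)"
    by simp
  show "set_integrable lborel (einterval a t) (\<lambda>s. R s / p s * K s ^ n)"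
    by (rule left_integral_eq_nonneg_antiderivative(1)[OF deriv cont nonneg lim t])
  show "(LBINT s=a..t. R s / p s * K s ^ n) = K t ^ Suc n / Suc n"
    by (rule left_integral_eq_nonneg_antiderivative(2)[OF deriv cont nonneg lim t])
qed

lemma div_p_integral_estimate:
  fixes h :: "real \<Rightarrow> complex"
  assumes cont: "\<And>x. x \<in> I \<Longrightarrow> isCont h x" and "0 \<le> B"
    and bound: "\<And>s. s \<in> I \<Longrightarrow> s \<le> t \<Longrightarrow> norm (h s) \<le> B * R s * K s ^ n" and t: "t \<in> I"
  shows "set_integrable lborel (einterval a t) (\<lambda>s. h s / p s)"
    and "norm (LBINT s=a..t. h s / p s) \<le> B * K t ^ Suc n / Suc n"
proof -
  have le: "norm (h s / p s) \<le> B * (R s / p s * K s ^ n)" if "s \<in> einterval a t" for s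
  proof -
    have s: "s \<in> I" "s \<le> t"
      using einterval_left_subset[OF t] that by (auto simp: einterval_def)
    have "norm (h s / p s) = norm (h s) / p s"
      using p_pos[OF s(1)] by (simp add: norm_divide)
    also have "\<dots> \<le> B * R s * K s ^ n / p s"
      using bound[OF s] p_pos[OF s(1)] by (intro divide_right_mono) auto
    finally show ?thesis
      by simp
  qed
  have dominating: "set_integrable lborel (einterval a t) (\<lambda>s. B * (R s / p s * K s ^ n))"
    by (intro set_integrable_mult_right R_div_p_mult_K_power_integral(1)[OF t])
  have "\<And>x. x \<in> I \<Longrightarrow> isCont (\<lambda>s. h s / complex_of_real (p s)) x"
    using cont p_cont p_pos by (intro continuous_intros) (auto simp: less_imp_neq[symmetric])
  from set_borel_measurable_einterval_left[OF this t]
  show int: "set_integrable lborel (einterval a t) (\<lambda>s. h s / p s)"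
  proof (rule set_integrable_bound[OF dominating])
    show "AE s in lborel. s \<in> einterval a t \<longrightarrow> norm (h s / p s) \<le> norm (B * (R s / p s * K s ^ n))"
    proof (intro AE_I2 impI)
      fix s assume s: "s \<in> einterval a t"
      then have "s \<in> I"
        using einterval_left_subset[OF t] by auto
      then have "0 \<le> B * (R s / p s * K s ^ n)"
        using \<open>0 \<le> B\<close> R_nonneg K_nonneg p_pos by (auto intro!: mult_nonneg_nonneg divide_nonneg_pos)
      with le[OF s] show "norm (h s / p s) \<le> norm (B * (R s / p s * K s ^ n))"
        by (simp only: real_norm_def abs_of_nonneg)
    qed
  qed
  have "norm (LBINT s=a..t. h s / p s) \<le> (LBINT s=a..t. B * (R s / p s * K s ^ n))"
    using t by (intro norm_left_integral_le[OF int dominating le]) (auto simp: einterval_def)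
  also have "\<dots> = B * (K t ^ Suc n / Suc n)"
    by (simp only: interval_lebesgue_integral_mult_right R_div_p_mult_K_power_integral(2)[OF t])
  finally show "norm (LBINT s=a..t. h s / p s) \<le> B * K t ^ Suc n / Suc n"
    by simp
qed

primrec phi :: "nat \<Rightarrow> real \<Rightarrow> complex" where
  "phi 0 = (\<lambda>x. 1)"
| "phi (Suc n) = (\<lambda>x. LBINT t=a..x. (LBINT s=a..t. r s * phi n s) / p t)"

definition psi :: "nat \<Rightarrow> real \<Rightarrow> complex" where
  "psi n t = (LBINT s=a..t. r s * phi n s)"

lemma phi_Suc_eq: "phi (Suc n) x = (LBINT t=a..x. psi n t / p t)"
  by (simp add: psi_def)

lemma phi_step:
  assumes cont: "\<And>x. x \<in> I \<Longrightarrow> isCont (phi n) x"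
    and bound: "\<And>x. x \<in> I \<Longrightarrow> norm (phi n x) \<le> K x ^ n / fact n"
  shows psi_deriv_step: "\<And>x. x \<in> I \<Longrightarrow> (psi n has_vector_derivative r x * phi n x) (at x)"
    and psi_bound_step: "\<And>t. t \<in> I \<Longrightarrow> norm (psi n t) \<le> R t * K t ^ n / fact n"
    and phi_Suc_deriv_step: "\<And>x. x \<in> I \<Longrightarrow> (phi (Suc n) has_vector_derivative psi n x / p x) (at x)"
    and phi_Suc_bound_step: "\<And>t. t \<in> I \<Longrightarrow> norm (phi (Suc n) t) \<le> K t ^ Suc n / fact (Suc n)"
proof -
  have B: "0 \<le> 1 / (fact n :: real)"
    by simp
  have bound': "norm (phi n s) \<le> 1 / fact n * K s ^ n" if "s \<in> I" for s
    using bound[OF that] by simp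
  have "\<And>x. x \<in> I \<Longrightarrow> isCont (\<lambda>s. complex_of_real (r s) * phi n s) x"
    using r_cont cont by (intro continuous_intros) auto
  moreover have "set_integrable lborel (einterval a t) (\<lambda>s. r s * phi n s)" if "t \<in> I" for t
    by (rule r_mult_integral_estimate(1)[where n=n and B="1 / fact n"]) (use B cont bound' that in blast)+
  ultimately show psi_deriv: "\<And>x. x \<in> I \<Longrightarrow> (psi n has_vector_derivative r x * phi n x) (at x)"
    unfolding psi_def[abs_def] by (rule left_integral_has_vector_derivative)
  have psi_bound': "norm (psi n t) \<le> 1 / fact n * R t * K t ^ n" if "t \<in> I" for t
    unfolding psi_def
    by (rule r_mult_integral_estimate(2)[where n=n and B="1 / fact n"]) (use B cont bound' that in blast)+
  then show "\<And>t. t \<in> I \<Longrightarrow> norm (psi n t) \<le> R t * K t ^ n / fact n"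
    by simp
  have psi_cont: "\<And>x. x \<in> I \<Longrightarrow> isCont (psi n) x"
    using has_vector_derivative_continuous[OF psi_deriv] by simp
  have "\<And>x. x \<in> I \<Longrightarrow> isCont (\<lambda>s. psi n s / complex_of_real (p s)) x"
    using psi_cont p_cont p_pos by (intro continuous_intros) (auto simp: less_imp_neq[symmetric])
  moreover have "set_integrable lborel (einterval a t) (\<lambda>s. psi n s / p s)" if "t \<in> I" for t
    by (rule div_p_integral_estimate(1)[where n=n and B="1 / fact n"]) (use B psi_cont psi_bound' that in blast)+
  ultimately have "(phi (Suc n) has_vector_derivative psi n x / p x) (at x)" if "x \<in> I" for x
    unfolding phi_Suc_eq[abs_def] using that by (rule left_integral_has_vector_derivative)
  then show "\<And>x. x \<in> I \<Longrightarrow> (phi (Suc n) has_vector_derivative psi n x / p x) (at x)" .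
  show "norm (phi (Suc n) t) \<le> K t ^ Suc n / fact (Suc n)" if "t \<in> I" for t
  proof -
    have "norm (phi (Suc n) t) \<le> 1 / fact n * K t ^ Suc n / Suc n"
      unfolding phi_Suc_eq
      by (rule div_p_integral_estimate(2)[where n=n and B="1 / fact n"]) (use B psi_cont psi_bound' that in blast)+
    then show ?thesis
      by (simp add: field_simps)
  qed
qed

lemma phi_cont_bound: "(\<forall>x\<in>I. isCont (phi n) x) \<and> (\<forall>x\<in>I. norm (phi n x) \<le> K x ^ n / fact n)"
proof (induction n)
  case 0
  then show ?case
    by simp
next
  case (Suc n)
  then show ?case
    using has_vector_derivative_continuous[OF phi_Suc_deriv_step] phi_Suc_bound_step by blast
qed

lemma phi_cont: "x \<in> I \<Longrightarrow> isCont (phi n) x"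
  using phi_cont_bound by blast

lemma phi_bound: "x \<in> I \<Longrightarrow> norm (phi n x) \<le> K x ^ n / fact n"
  using phi_cont_bound by blast

lemma psi_deriv: "x \<in> I \<Longrightarrow> (psi n has_vector_derivative r x * phi n x) (at x)"
  using psi_deriv_step phi_cont phi_bound by blast

lemma psi_bound: "x \<in> I \<Longrightarrow> norm (psi n x) \<le> R x * K x ^ n / fact n"
  using psi_bound_step phi_cont phi_bound by blast

lemma phi_Suc_deriv: "x \<in> I \<Longrightarrow> (phi (Suc n) has_vector_derivative psi n x / p x) (at x)"
  using phi_Suc_deriv_step phi_cont phi_bound by blast

lemma homogeneous_solution_step:
  fixes u q :: "real \<Rightarrow> complex" and z :: complex
  assumes u_deriv: "\<And>x. x \<in> I \<Longrightarrow> (u has_vector_derivative q x / p x) (at x)"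
    and q_deriv: "\<And>x. x \<in> I \<Longrightarrow> (q has_vector_derivative - (z * r x * u x)) (at x)"
    and u_lim: "(u \<longlongrightarrow> 0) (at_left_end a)" and q_lim: "(q \<longlongrightarrow> 0) (at_left_end a)"
    and "0 \<le> B" and bound: "\<And>s. s \<in> I \<Longrightarrow> s \<le> x \<Longrightarrow> norm (u s) \<le> B * K s ^ n"
    and t: "t \<in> I" "t \<le> x"
  shows "norm (u t) \<le> norm z * B * K t ^ Suc n / Suc n"
proof -
  have zB: "0 \<le> norm z * B"
    using \<open>0 \<le> B\<close> by simp
  have u_cont: "isCont u s" if "s \<in> I" for s
    using has_vector_derivative_continuous[OF u_deriv[OF that]] by simp
  have q_cont: "isCont q s" if "s \<in> I" for s
    using has_vector_derivative_continuous[OF q_deriv[OF that]] by simp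
  have g_cont: "isCont (\<lambda>s. - (z * u s)) s" if "s \<in> I" for s
    using u_cont[OF that] by (intro continuous_intros)
  have g_bound: "norm (- (z * u s)) \<le> norm z * B * K s ^ n" if "s \<in> I" "s \<le> y" "y \<le> x" for s y
    using mult_left_mono[OF bound[of s], of "norm z"] that by (simp add: norm_mult mult.assoc)
  have q_bound: "norm (q s) \<le> norm z * B * R s * K s ^ n" if s: "s \<in> I" "s \<le> x" for s
  proof -
    note estimate = r_mult_integral_estimate[OF g_cont zB g_bound[where y=s] s(1)]
    have "(LBINT s'=a..s. r s' * - (z * u s')) = q s"
    proof (rule left_integral_eq_antiderivative[OF _ _ q_lim s(1) estimate(1)])
      show "(q has_vector_derivative r s' * - (z * u s')) (at s')" if "s' \<in> I" for s'
        using q_deriv[OF that] by (simp add: algebra_simps)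
      show "isCont (\<lambda>s'. r s' * - (z * u s')) s'" if "s' \<in> I" for s'
        using that u_cont r_cont by (intro continuous_intros) auto
    qed (use s in auto)
    with estimate(2) show ?thesis
      using s by simp
  qed
  note estimate = div_p_integral_estimate[OF q_cont zB q_bound t(1)]
  have "(LBINT s=a..t. q s / p s) = u t"
  proof (rule left_integral_eq_antiderivative[OF u_deriv _ u_lim t(1) estimate(1)])
    show "isCont (\<lambda>s. q s / p s) s" if "s \<in> I" for s
      using that q_cont p_cont p_pos by (intro continuous_intros) (auto simp: less_imp_neq[symmetric])
  qed (use t in auto)
  with estimate(2) show ?thesis
    using t by simp
qed

lemma homogeneous_solution_bound:
  fixes u q :: "real \<Rightarrow> complex" and z :: complex
  assumes u_deriv: "\<And>x. x \<in> I \<Longrightarrow> (u has_vector_derivative q x / p x) (at x)"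
    and q_deriv: "\<And>x. x \<in> I \<Longrightarrow> (q has_vector_derivative - (z * r x * u x)) (at x)"
    and u_lim: "(u \<longlongrightarrow> 0) (at_left_end a)" and q_lim: "(q \<longlongrightarrow> 0) (at_left_end a)"
    and "0 \<le> M" and M: "\<And>t. t \<in> I \<Longrightarrow> t \<le> x \<Longrightarrow> norm (u t) \<le> M"
  shows "t \<in> I \<Longrightarrow> t \<le> x \<Longrightarrow> norm (u t) \<le> M * norm z ^ n / fact n * K t ^ n"
proof (induction n arbitrary: t)
  case 0
  then show ?case
    using M by simp
next
  case (Suc n)
  have "norm (u t) \<le> norm z * (M * norm z ^ n / fact n) * K t ^ Suc n / Suc n"
    using \<open>0 \<le> M\<close> Suc
    by (intro homogeneous_solution_step[OF u_deriv q_deriv u_lim q_lim]) auto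
  then show ?case
    by (simp add: field_simps)
qed

lemma homogeneous_solution_eq_0:
  fixes u q :: "real \<Rightarrow> complex" and z :: complex
  assumes u_deriv: "\<And>x. x \<in> I \<Longrightarrow> (u has_vector_derivative q x / p x) (at x)"
    and q_deriv: "\<And>x. x \<in> I \<Longrightarrow> (q has_vector_derivative - (z * r x * u x)) (at x)"
    and u_lim: "(u \<longlongrightarrow> 0) (at_left_end a)" and q_lim: "(q \<longlongrightarrow> 0) (at_left_end a)"
    and x: "x \<in> I"
  shows "u x = 0"
proof -
  have "isCont u t" if "t \<in> I" for t
    using has_vector_derivative_continuous[OF u_deriv[OF that]] by simp
  then obtain M where M: "0 \<le> M" "\<And>t. t \<in> I \<Longrightarrow> t \<le> x \<Longrightarrow> norm (u t) \<le> M"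
    using bounded_near_left_end[OF _ u_lim x] by blast
  have "norm (u x) \<le> M * ((norm z * K x) ^ n / fact n)" for n
    using homogeneous_solution_bound[where n=n, OF u_deriv q_deriv u_lim q_lim M x order_refl]
    by (simp add: power_mult_distrib)
  moreover have "(\<lambda>n. M * ((norm z * K x) ^ n / fact n)) \<longlonglongrightarrow> 0"
    by (intro tendsto_mult_right_zero summable_LIMSEQ_zero exp_series_summable)
  ultimately have "norm (u x) \<le> 0"
    by (intro LIMSEQ_le_const) auto
  then show ?thesis
    by simp
qed

definition W :: "complex \<Rightarrow> real \<Rightarrow> complex" where
  "W z x = (\<Sum>n. (-z) ^ n * phi n x)"

text \<open>\<open>Q z\<close> is the quasi-derivative \<open>p (W z)'\<close>, see \<open>qder_W\<close>.\<close>

definition Q :: "complex \<Rightarrow> real \<Rightarrow> complex" where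
  "Q z x = (\<Sum>n. (-z) ^ Suc n * psi n x)"

lemma W_term_bound:
  assumes "x \<in> I"
  shows "norm ((-z) ^ n * phi n x) \<le> (norm z * K x) ^ n / fact n"
proof -
  have "norm ((-z) ^ n * phi n x) = norm z ^ n * norm (phi n x)"
    by (simp add: norm_mult norm_power)
  also have "\<dots> \<le> norm z ^ n * (K x ^ n / fact n)"
    by (intro mult_left_mono phi_bound assms) auto
  finally show ?thesis
    by (simp add: power_mult_distrib)
qed

lemma W_sums: "x \<in> I \<Longrightarrow> (\<lambda>n. (-z) ^ n * phi n x) sums W z x"
  unfolding W_def
  by (intro summable_sums summable_comparison_test'[OF exp_series_summable W_term_bound])

lemma W_bound: "x \<in> I \<Longrightarrow> norm (W z x) \<le> exp (norm z * K x)"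
  unfolding W_def sums_unique[OF exp_series_sums]
  by (intro norm_suminf_le W_term_bound exp_series_summable)

lemma W_Suc_sums: "x \<in> I \<Longrightarrow> (\<lambda>n. (-z) ^ Suc n * phi (Suc n) x) sums (W z x - 1)"
  using W_sums[of x z] by (subst sums_Suc_iff) simp

lemma W_minus_1_bound:
  assumes x: "x \<in> I"
  shows "norm (W z x - 1) \<le> exp (norm z * K x) - 1"
proof -
  have exp: "(\<lambda>n. (norm z * K x) ^ Suc n / fact (Suc n)) sums (exp (norm z * K x) - 1)"
    using exp_series_sums[of "norm z * K x"] by (subst sums_Suc_iff) simp
  have "norm (W z x - 1) = norm (\<Sum>n. (-z) ^ Suc n * phi (Suc n) x)"
    by (simp add: sums_unique[OF W_Suc_sums[OF x]])
  also have "\<dots> \<le> (\<Sum>n. (norm z * K x) ^ Suc n / fact (Suc n))"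
    by (intro norm_suminf_le W_term_bound x sums_summable[OF exp])
  also have "\<dots> = exp (norm z * K x) - 1"
    by (simp add: sums_unique[OF exp])
  finally show ?thesis .
qed

lemma Q_term_bound:
  assumes "x \<in> I"
  shows "norm ((-z) ^ Suc n * psi n x) \<le> norm z * R x * ((norm z * K x) ^ n / fact n)"
proof -
  have "norm ((-z) ^ Suc n * psi n x) = norm z ^ Suc n * norm (psi n x)"
    by (simp add: norm_mult norm_power)
  also have "\<dots> \<le> norm z ^ Suc n * (R x * K x ^ n / fact n)"
    by (intro mult_left_mono psi_bound assms) auto
  finally show ?thesis
    by (simp add: power_mult_distrib ac_simps)
qed

lemma Q_sums: "x \<in> I \<Longrightarrow> (\<lambda>n. (-z) ^ Suc n * psi n x) sums Q z x"
  unfolding Q_def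
  by (intro summable_sums summable_comparison_test'[OF summable_mult[OF exp_series_summable] Q_term_bound])

lemma Q_bound: "x \<in> I \<Longrightarrow> norm (Q z x) \<le> norm z * R x * exp (norm z * K x)"
  unfolding Q_def sums_unique[OF sums_mult[OF exp_series_sums]]
  by (intro norm_suminf_le Q_term_bound summable_mult exp_series_summable)

lemma W_tendsto_1: "(W z \<longlongrightarrow> 1) (at_left_end a)"
proof -
  obtain c where c: "c \<in> I"
    using einterval_nonempty[OF a_less_b] by blast
  have "((\<lambda>t. W z t - 1) \<longlongrightarrow> 0) (at_left_end a)"
  proof (rule Lim_null_comparison)
    show "\<forall>\<^sub>F t in at_left_end a. norm (W z t - 1) \<le> exp (norm z * K t) - 1"
      using eventually_at_left_end_below[OF c] by eventually_elim (rule W_minus_1_bound, simp)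
    have "((\<lambda>t. exp (norm z * K t) - 1) \<longlongrightarrow> exp (norm z * 0) - 1) (at_left_end a)"
      by (intro tendsto_intros K_tendsto_0)
    then show "((\<lambda>t. exp (norm z * K t) - 1) \<longlongrightarrow> 0) (at_left_end a)"
      by simp
  qed
  then show ?thesis
    by (simp add: LIM_zero_iff)
qed

lemma Q_tendsto_0: "(Q z \<longlongrightarrow> 0) (at_left_end a)"
proof (rule Lim_null_comparison)
  obtain c where c: "c \<in> I"
    using einterval_nonempty[OF a_less_b] by blast
  show "\<forall>\<^sub>F t in at_left_end a. norm (Q z t) \<le> norm z * R t * exp (norm z * K t)"
    using eventually_at_left_end_below[OF c] by eventually_elim (rule Q_bound, simp)
  have "((\<lambda>t. norm z * R t * exp (norm z * K t)) \<longlongrightarrow> norm z * 0 * exp (norm z * 0)) (at_left_end a)"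
    by (intro tendsto_intros K_tendsto_0 R_tendsto_0)
  then show "((\<lambda>t. norm z * R t * exp (norm z * K t)) \<longlongrightarrow> 0) (at_left_end a)"
    by simp
qed

lemma W_deriv_term_bound:
  assumes de: "d \<in> I" "e \<in> I" and m: "0 < m" "\<And>t. t \<in> {d..e} \<Longrightarrow> m \<le> p t"
    and t: "t \<in> {d..e}"
  shows "norm ((-z) ^ Suc n * (psi n t / p t)) \<le> norm z * (R e / m) * ((norm z * K e) ^ n / fact n)"
proof -
  have tI: "t \<in> I" "t \<le> e"
    using t Icc_subset_einterval[OF de] by auto
  have "norm (psi n t) \<le> R t * K t ^ n / fact n"
    by (rule psi_bound[OF tI(1)])
  also have "\<dots> \<le> R e * K e ^ n / fact n"
    using R_mono[OF tI(1) de(2) tI(2)] K_mono[OF tI(1) de(2) tI(2)] R_nonneg[OF tI(1)] K_nonneg[OF tI(1)]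
    by (intro divide_right_mono mult_mono power_mono) (auto intro: R_nonneg[OF de(2)])
  finally have psi_le: "norm (psi n t) / p t \<le> R e * K e ^ n / fact n / m"
    using m p_pos[OF tI(1)] t R_nonneg[OF de(2)] K_nonneg[OF de(2)] by (intro frac_le) auto
  have "norm ((-z) ^ Suc n * (psi n t / p t)) = norm z ^ Suc n * (norm (psi n t) / p t)"
    using p_pos[OF tI(1)] by (simp add: norm_mult norm_power norm_divide)
  also have "\<dots> \<le> norm z ^ Suc n * (R e * K e ^ n / fact n / m)"
    using psi_le by (intro mult_left_mono) auto
  also have "\<dots> = norm z * (R e / m) * ((norm z * K e) ^ n / fact n)"
    by (simp add: power_mult_distrib ac_simps)
  finally show ?thesis .
qed

lemma Q_deriv_term_bound:
  assumes de: "d \<in> I" "e \<in> I" and m: "\<And>t. t \<in> {d..e} \<Longrightarrow> r t \<le> m"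
    and t: "t \<in> {d..e}"
  shows "norm ((-z) ^ Suc n * (r t * phi n t)) \<le> norm z * m * ((norm z * K e) ^ n / fact n)"
proof -
  have tI: "t \<in> I" "t \<le> e"
    using t Icc_subset_einterval[OF de] by auto
  have "norm (phi n t) \<le> K t ^ n / fact n"
    by (rule phi_bound[OF tI(1)])
  also have "\<dots> \<le> K e ^ n / fact n"
    using K_mono[OF tI(1) de(2) tI(2)] K_nonneg[OF tI(1)] by (intro divide_right_mono power_mono) auto
  finally have phi_le: "r t * norm (phi n t) \<le> m * (K e ^ n / fact n)"
    using m[OF t] r_pos[OF tI(1)] by (intro mult_mono) auto
  have "norm ((-z) ^ Suc n * (r t * phi n t)) = norm z ^ Suc n * (r t * norm (phi n t))"
    using r_pos[OF tI(1)] by (simp add: norm_mult norm_power)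
  also have "\<dots> \<le> norm z ^ Suc n * (m * (K e ^ n / fact n))"
    using phi_le by (intro mult_left_mono) auto
  also have "\<dots> = norm z * m * ((norm z * K e) ^ n / fact n)"
    by (simp add: power_mult_distrib)
  finally show ?thesis .
qed

lemma W_deriv:
  assumes x: "x \<in> I"
  shows "(W z has_vector_derivative Q z x / p x) (at x)"
proof -
  let ?f = "\<lambda>n t. (-z) ^ Suc n * phi (Suc n) t"
  let ?f' = "\<lambda>n t. (-z) ^ Suc n * (psi n t / p t)"
  have "((\<lambda>t. \<Sum>n. ?f n t) has_vector_derivative (\<Sum>n. ?f' n x)) (at x)"
  proof (rule series_has_vector_derivative[OF _ _ _ x])
    show "(?f n has_vector_derivative ?f' n t) (at t)" if "t \<in> I" for n t
      using phi_Suc_deriv[OF that] by (rule has_vector_derivative_mult_right)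
    show "summable (\<lambda>n. ?f n t)" if "t \<in> I" for t
      using W_Suc_sums[OF that] by (rule sums_summable)
    fix d e assume de: "d \<in> I" "e \<in> I"
    obtain m where "0 < m" "\<And>t. t \<in> {d..e} \<Longrightarrow> m \<le> p t"
      using p_bounded_below_on_Icc[OF de] by blast
    with de show "\<exists>M. summable M \<and> (\<forall>n. \<forall>t\<in>{d..e}. norm (?f' n t) \<le> M n)"
      by (intro exI[of _ "\<lambda>n. norm z * (R e / m) * ((norm z * K e) ^ n / fact n)"] conjI
          summable_mult exp_series_summable allI ballI W_deriv_term_bound)
  qed
  moreover have "(\<lambda>n. ?f' n x) sums (Q z x / p x)"
    using sums_divide[OF Q_sums[OF x, of z], of "of_real (p x)"] by simp
  ultimately have "((\<lambda>t. 1 + (\<Sum>n. ?f n t)) has_vector_derivative Q z x / p x) (at x)"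
    by (auto intro!: derivative_eq_intros simp: sums_iff)
  moreover have "1 + (\<Sum>n. ?f n y) = W z y" if "y \<in> I" for y
    unfolding sums_unique[OF W_Suc_sums[OF that, of z], symmetric] by simp
  ultimately show ?thesis
    by (rule has_vector_derivative_transform_within_open[OF _ open_einterval x])
qed

lemma Q_deriv:
  assumes x: "x \<in> I"
  shows "(Q z has_vector_derivative - (z * r x * W z x)) (at x)"
proof -
  let ?f = "\<lambda>n t. (-z) ^ Suc n * psi n t"
  let ?f' = "\<lambda>n t. (-z) ^ Suc n * (r t * phi n t)"
  have "((\<lambda>t. \<Sum>n. ?f n t) has_vector_derivative (\<Sum>n. ?f' n x)) (at x)"
  proof (rule series_has_vector_derivative[OF _ _ _ x])
    show "(?f n has_vector_derivative ?f' n t) (at t)" if "t \<in> I" for n t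
      using psi_deriv[OF that] by (rule has_vector_derivative_mult_right)
    show "summable (\<lambda>n. ?f n t)" if "t \<in> I" for t
      using Q_sums[OF that] by (rule sums_summable)
    fix d e assume de: "d \<in> I" "e \<in> I"
    obtain m where "\<And>t. t \<in> {d..e} \<Longrightarrow> r t \<le> m"
      using r_bounded_above_on_Icc[OF de] by blast
    with de show "\<exists>M. summable M \<and> (\<forall>n. \<forall>t\<in>{d..e}. norm (?f' n t) \<le> M n)"
      by (intro exI[of _ "\<lambda>n. norm z * m * ((norm z * K e) ^ n / fact n)"] conjI
          summable_mult exp_series_summable allI ballI Q_deriv_term_bound)
  qed
  moreover have "(\<lambda>n. ?f' n x) sums (- (z * r x * W z x))"
    using sums_mult[OF W_sums[OF x], of "- (z * r x)"] by (simp add: algebra_simps)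
  ultimately show ?thesis
    by (simp add: Q_def[abs_def] sums_iff)
qed

lemma qder_W:
  assumes "x \<in> I"
  shows "qder p (W z) x = Q z x"
  using vector_derivative_at[OF W_deriv[OF assms]] p_pos[OF assms] by (simp add: qder_def)

lemma W_is_solution: "is_solution a b p r z (W z)"
  unfolding is_solution_def ivl_eq_einterval
proof (intro ballI conjI)
  fix x assume x: "x \<in> I"
  show "W z differentiable at x"
    by (rule differentiableI_vector[OF W_deriv[OF x]])
  show "(qder p (W z) has_vector_derivative - (z * r x * W z x)) (at x)"
    by (rule has_vector_derivative_transform_within_open[OF Q_deriv[OF x] open_einterval x])
      (simp add: qder_W)
qed

lemma qder_W_tendsto_0: "(qder p (W z) \<longlongrightarrow> 0) (at_left_end a)"
proof (rule Lim_transform_eventually[OF Q_tendsto_0])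
  obtain c where c: "c \<in> I"
    using einterval_nonempty[OF a_less_b] by blast
  show "\<forall>\<^sub>F t in at_left_end a. Q z t = qder p (W z) t"
    using eventually_at_left_end_below[OF c] by eventually_elim (simp add: qder_W)
qed

text \<open>The difference \<open>u = v - W z\<close> of two solutions with the same initial data solves the
  first order system \<open>u' = q / p\<close>, \<open>q' = - z r u\<close> with zero data at \<open>a\<close>.\<close>

lemma W_unique:
  assumes v: "is_solution a b p r z v" and v_lim: "(v \<longlongrightarrow> 1) (at_left_end a)"
    and qv_lim: "(qder p v \<longlongrightarrow> 0) (at_left_end a)" and x: "x \<in> I"
  shows "v x = W z x"
proof -
  have v_diff: "\<And>t. t \<in> I \<Longrightarrow> v differentiable at t"
    and qv_deriv: "\<And>t. t \<in> I \<Longrightarrow> (qder p v has_vector_derivative - (z * r t * v t)) (at t)"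
    using v unfolding is_solution_def ivl_eq_einterval by auto
  have "v x - W z x = 0"
  proof (rule homogeneous_solution_eq_0[where u = "\<lambda>t. v t - W z t" and q = "\<lambda>t. qder p v t - Q z t",
        OF _ _ _ _ x])
    show "((\<lambda>t. v t - W z t) has_vector_derivative (qder p v t - Q z t) / p t) (at t)" if t: "t \<in> I" for t
    proof -
      have "((\<lambda>t. v t - W z t) has_vector_derivative vector_derivative v (at t) - Q z t / p t) (at t)"
        using v_diff[OF t] W_deriv[OF t] by (intro has_vector_derivative_diff) (auto simp: vector_derivative_works)
      then show ?thesis
        using p_pos[OF t] by (simp add: qder_def diff_divide_distrib)
    qed
    show "((\<lambda>t. qder p v t - Q z t) has_vector_derivative - (z * r t * (v t - W z t))) (at t)" if t: "t \<in> I" for t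
      using has_vector_derivative_diff[OF qv_deriv[OF t] Q_deriv[OF t]] by (simp add: algebra_simps)
    show "((\<lambda>t. v t - W z t) \<longlongrightarrow> 0) (at_left_end a)"
      using tendsto_diff[OF v_lim W_tendsto_1] by simp
    show "((\<lambda>t. qder p v t - Q z t) \<longlongrightarrow> 0) (at_left_end a)"
      using tendsto_diff[OF qv_lim Q_tendsto_0] by simp
  qed
  then show ?thesis
    by simp
qed

text \<open>In \<open>z\<close>, \<open>W z x\<close> is the power series \<open>\<Sum>n. (-1)\<^sup>n phi n x z\<^sup>n\<close>, which converges everywhere.\<close>

lemma W_entire_exp_type:
  assumes x: "x \<in> I"
  shows "entire_exp_type (\<lambda>z. W z x)"
proof -
  define c where "c n = phi n x * (-1) ^ n" for n
  have term_eq: "(-z) ^ n * phi n x = c n * z ^ n" for z n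
    unfolding c_def power_minus[of z n] by (simp only: mult.assoc mult.commute mult.left_commute)
  have W_eq: "(\<lambda>z. W z x) = (\<lambda>z. \<Sum>n. c n * z ^ n)"
    by (rule ext) (simp only: W_def term_eq)
  have "summable (\<lambda>n. c n * z ^ n)" for z
    using sums_summable[OF W_sums[OF x, of z]] by (simp only: term_eq)
  then have "((\<lambda>z. \<Sum>n. c n * z ^ n) has_field_derivative (\<Sum>n. diffs c n * z ^ n)) (at z)" for z
    by (rule termdiffs_strong_converges_everywhere)
  then have "(\<lambda>z. W z x) holomorphic_on UNIV"
    unfolding W_eq holomorphic_on_def field_differentiable_def by blast
  moreover have "\<forall>z. norm (W z x) \<le> 1 * exp (K x * norm z)"
    using W_bound[OF x] by (simp add: mult.commute)
  ultimately show ?thesis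
    unfolding entire_exp_type_def by blast
qed

end

lemma (in sturm_liouville) sturm_liouville_K_if_double_integral:
  assumes c: "c \<in> I"
    and fin: "(\<integral>\<^sup>+ y. ennreal (indicator {y. a < ereal y \<and> y < c} y *
            (integral {y..c} (\<lambda>x. 1 / p x) * r y)) \<partial>lborel) < \<infinity>"
  shows "sturm_liouville_K a b p r"
proof -
  from c fin have weighted: "set_integrable lborel (einterval a c) (\<lambda>y. (Phi c - Phi y) * r y)"
    by (rule weighted_r_integrable)
  interpret sturm_liouville_R a b p r
    by unfold_locales (rule r_integrable_if_weighted[OF c weighted])
  show ?thesis
    by unfold_locales (use R_div_p_integrable_if_weighted[OF c weighted] c in blast)
qed

theorem mainTheorem1:
  fixes a b :: ereal and p r :: "real \<Rightarrow> real"
  assumes ab: "a < b"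
    and p_pos: "\<forall>x\<in>ivl a b. p x > 0"
    and r_pos: "\<forall>x\<in>ivl a b. r x > 0"
    and p_ac: "loc_abs_cont a b p"
    and r_ac: "loc_abs_cont a b r"
    and p'_ac: "\<exists>p'. (\<forall>x\<in>ivl a b. (p has_real_derivative p' x) (at x)) \<and> loc_abs_cont a b p'"
    and r'_ac: "\<exists>r'. (\<forall>x\<in>ivl a b. (r has_real_derivative r' x) (at x)) \<and> loc_abs_cont a b r'"
    and int_cond: "\<exists>c\<in>ivl a b.
        (\<integral>\<^sup>+ y. ennreal (indicator {y. a < ereal y \<and> y < c} y *
            (integral {y..c} (\<lambda>x. 1 / p x) * r y)) \<partial>lborel) < \<infinity>"
  shows "\<exists>W :: complex \<Rightarrow> real \<Rightarrow> complex.
     (\<forall>z. is_solution a b p r z (W z) \<and>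
           (W z \<longlongrightarrow> 1) (at_left_end a) \<and>
           (qder p (W z) \<longlongrightarrow> 0) (at_left_end a)) \<and>
     (\<forall>z v. is_solution a b p r z v \<and> (v \<longlongrightarrow> 1) (at_left_end a) \<and>
           (qder p v \<longlongrightarrow> 0) (at_left_end a) \<longrightarrow> (\<forall>x\<in>ivl a b. v x = W z x)) \<and>
     (\<forall>x\<in>ivl a b. entire_exp_type (\<lambda>z. W z x))"
proof -
  obtain p' where p': "\<forall>x\<in>ivl a b. (p has_real_derivative p' x) (at x)"
    using p'_ac by blast
  obtain r' where r': "\<forall>x\<in>ivl a b. (r has_real_derivative r' x) (at x)"
    using r'_ac by blast
  interpret sturm_liouville a b p r
  proof
    show "a < b"
      by (rule ab)
    show "\<And>x. x \<in> einterval a b \<Longrightarrow> 0 < p x" "\<And>x. x \<in> einterval a b \<Longrightarrow> 0 < r x"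
      using p_pos r_pos by (simp_all add: ivl_eq_einterval)
    show "\<And>x. x \<in> einterval a b \<Longrightarrow> isCont p x" "\<And>x. x \<in> einterval a b \<Longrightarrow> isCont r x"
      using p' r' by (auto simp: ivl_eq_einterval intro: DERIV_isCont)
  qed
  interpret sturm_liouville_K a b p r
    using int_cond sturm_liouville_K_if_double_integral by (auto simp: ivl_eq_einterval)
  have "\<forall>z. is_solution a b p r z (W z) \<and> (W z \<longlongrightarrow> 1) (at_left_end a) \<and>
      (qder p (W z) \<longlongrightarrow> 0) (at_left_end a)"
    using W_is_solution W_tendsto_1 qder_W_tendsto_0 by blast
  moreover have "\<forall>z v. is_solution a b p r z v \<and> (v \<longlongrightarrow> 1) (at_left_end a) \<and>
      (qder p v \<longlongrightarrow> 0) (at_left_end a) \<longrightarrow> (\<forall>x\<in>ivl a b. v x = W z x)"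
    by (simp add: W_unique ivl_eq_einterval)
  moreover have "\<forall>x\<in>ivl a b. entire_exp_type (\<lambda>z. W z x)"
    by (simp add: W_entire_exp_type ivl_eq_einterval)
  ultimately show ?thesis
    by blast
qed

end
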